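(* Let $d\ge1$, let $i\in[n]$, and let $v_i:\mathbb{R}_{\ge0}^n\to\mathbb{R}_{\ge0}$ be a $d$-SOS function. Let $A$ be a uniformly random subset of $[n]\setminus\{i\}$ (each of the $2^{n-1}$ subsets equally likely) and $B=([n]\setminus\{i\})\setminus A$. Then for every $\mathbf{s}\in\mathbb{R}_{\ge0}^n$, $$\mathbb{E}_A\big[v_i(\mathbf{s}_A,\mathbf{0}_B,s_i)\big]\ge\frac{1}{d+1}\,v_i(\mathbf{s}),$$ where $(\mathbf{s}_A,\mathbf{0}_B,s_i)$ is the vector agreeing with $\mathbf{s}$ on $A\cup\{i\}$ and equal to $0$ on $B$.
   Context: A function $v:\mathbb{R}_{\ge0}^n\to\mathbb{R}_{\ge0}$ is $d$-SOS if for every coordinate $j$, every $s_j\ge0$, every $\delta\ge0$, and every $\mathbf{s}_{-j},\mathbf{s}'_{-j}$ with $\mathbf{s}'_{-j}\le\mathbf{s}_{-j}$ coordinate-wise, $d\cdot\big(v(\mathbf{s}'_{-j},s_j+\delta)-v(\mathbf{s}'_{-j},s_j)\big)\ge v(\mathbf{s}_{-j},s_j+\delta)-v(\mathbf{s}_{-j},s_j)$. SOS means $1$-SOS. *)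

theory Defs
  imports "HOL-Analysis.Analysis"
begin

text \<open>Vectors in R_{\<ge>0}^n are represented as functions nat \<Rightarrow> real that are
  nonnegative on coordinates {..<n} and zero outside (canonical representation).\<close>

definition nnvec :: "nat \<Rightarrow> (nat \<Rightarrow> real) set" where
  "nnvec n = {s. (\<forall>j<n. 0 \<le> s j) \<and> (\<forall>j\<ge>n. s j = 0)}"

definition dSOS :: "nat \<Rightarrow> real \<Rightarrow> ((nat \<Rightarrow> real) \<Rightarrow> real) \<Rightarrow> bool" where
  "dSOS n d v \<longleftrightarrow>
     (\<forall>s\<in>nnvec n. 0 \<le> v s) \<and>
     (\<forall>j<n. \<forall>s\<in>nnvec n. \<forall>s'\<in>nnvec n. \<forall>x \<ge> 0. \<forall>\<delta> \<ge> 0.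
        (\<forall>k<n. k \<noteq> j \<longrightarrow> s' k \<le> s k) \<longrightarrow>
        d * (v (s'(j := x + \<delta>)) - v (s'(j := x))) \<ge> v (s(j := x + \<delta>)) - v (s(j := x)))"

definition restrict_vec :: "(nat \<Rightarrow> real) \<Rightarrow> nat set \<Rightarrow> nat \<Rightarrow> nat \<Rightarrow> real" where
  "restrict_vec s A i = (\<lambda>j. if j \<in> A \<or> j = i then s j else 0)"

end

theory Submission
  imports Defs
begin

text \<open>Write \<open>f A\<close> for the value of \<open>v\<close> at the vector agreeing with \<open>s\<close> on \<open>A \<union> {i}\<close> and
  zero elsewhere, and \<open>B\<close> for the complement of \<open>A\<close> in \<open>[n] - {i}\<close>. Adding the coordinates of
  \<open>B\<close> one at a time, \<open>d\<close>-SOS bounds the gain from \<open>f A\<close> to \<open>v s\<close> by \<open>d\<close> times the gain from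
  \<open>f {}\<close> to \<open>f B\<close>, so \<open>v s \<le> f A + d f B\<close> by nonnegativity. Since \<open>A \<mapsto> B\<close> is a bijection of
  the subsets, adding this to the same inequality with \<open>A\<close> and \<open>B\<close> swapped and averaging
  gives \<open>v s \<le> (d + 1) E[f A]\<close>.\<close>

definition restrict_coords :: "(nat \<Rightarrow> real) \<Rightarrow> nat set \<Rightarrow> nat \<Rightarrow> real" where
  "restrict_coords s S = (\<lambda>j. if j \<in> S then s j else 0)"

lemma restrict_vec_eq_restrict_coords: "restrict_vec s A i = restrict_coords s (insert i A)"
  unfolding restrict_vec_def restrict_coords_def by auto

lemma restrict_coords_nnvec: "s \<in> nnvec n \<Longrightarrow> S \<subseteq> {..<n} \<Longrightarrow> restrict_coords s S \<in> nnvec n"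
  unfolding nnvec_def restrict_coords_def by auto

lemma restrict_coords_full: "s \<in> nnvec n \<Longrightarrow> restrict_coords s {..<n} = s"
  unfolding nnvec_def restrict_coords_def by (auto simp: fun_eq_iff)

lemma dSOS_set_marginal_le:
  assumes sos: "dSOS n d v" and s: "s \<in> nnvec n"
    and "finite B" "B \<subseteq> {..<n}" "P \<subseteq> {..<n}" "B \<inter> P = {}" "Q \<subseteq> P"
  shows "v (restrict_coords s (P \<union> B)) - v (restrict_coords s P)
           \<le> d * (v (restrict_coords s (Q \<union> B)) - v (restrict_coords s Q))"
  using assms(3-)
proof (induction B rule: finite_induct)
  case empty
  then show ?case by simp
next
  case (insert b B)
  let ?r = "restrict_coords s"
  have b: "b < n" "0 \<le> s b" "b \<notin> P \<union> B" "b \<notin> Q \<union> B"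
    using insert s unfolding nnvec_def by auto
  have IH: "v (?r (P \<union> B)) - v (?r P) \<le> d * (v (?r (Q \<union> B)) - v (?r Q))"
    using insert by auto
  have nn: "?r (P \<union> B) \<in> nnvec n" "?r (Q \<union> B) \<in> nnvec n"
    using insert by (auto intro!: restrict_coords_nnvec[OF s])
  have smaller: "\<forall>k<n. k \<noteq> b \<longrightarrow> ?r (Q \<union> B) k \<le> ?r (P \<union> B) k"
    using s \<open>Q \<subseteq> P\<close> unfolding restrict_coords_def nnvec_def by auto
  have step: "d * (v ((?r (Q \<union> B))(b := 0 + s b)) - v ((?r (Q \<union> B))(b := 0)))
      \<ge> v ((?r (P \<union> B))(b := 0 + s b)) - v ((?r (P \<union> B))(b := 0))"
    using sos b nn smaller unfolding dSOS_def by blast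
  have "(?r (Q \<union> B))(b := 0 + s b) = ?r (Q \<union> insert b B)"
    "(?r (P \<union> B))(b := 0 + s b) = ?r (P \<union> insert b B)"
    "(?r (Q \<union> B))(b := 0) = ?r (Q \<union> B)"
    "(?r (P \<union> B))(b := 0) = ?r (P \<union> B)"
    using b unfolding restrict_coords_def by auto
  with step IH show ?case by (simp add: algebra_simps)
qed

lemma dSOS_le_split:
  assumes "0 \<le> d" "i < n" "dSOS n d v" "s \<in> nnvec n" "A \<subseteq> {..<n} - {i}"
  shows "v s \<le> v (restrict_coords s (insert i A))
                + d * v (restrict_coords s (insert i ({..<n} - {i} - A)))"
proof -
  let ?B = "{..<n} - {i} - A"
  have "v (restrict_coords s (insert i A \<union> ?B)) - v (restrict_coords s (insert i A))
      \<le> d * (v (restrict_coords s ({i} \<union> ?B)) - v (restrict_coords s {i}))"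
    by (rule dSOS_set_marginal_le) (use assms in auto)
  moreover have "insert i A \<union> ?B = {..<n}" "{i} \<union> ?B = insert i ?B"
    using assms by auto
  moreover have "0 \<le> v (restrict_coords s {i})"
    using assms restrict_coords_nnvec[of s n "{i}"] unfolding dSOS_def by auto
  ultimately show ?thesis
    using assms(1) restrict_coords_full[OF assms(4)]
    by (smt (verit) mult_left_mono)
qed

lemma sum_Pow_complement_bound:
  fixes f :: "'a set \<Rightarrow> real"
  assumes "finite U" "0 \<le> d" "\<And>A. A \<subseteq> U \<Longrightarrow> c \<le> f A + d * f (U - A)"
  shows "2 ^ card U * c \<le> (d + 1) * (\<Sum>A\<in>Pow U. f A)"
proof -
  have "bij_betw (\<lambda>A. U - A) (Pow U) (Pow U)"
    by (rule bij_betwI[where g = "\<lambda>A. U - A"]) auto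
  then have swap: "(\<Sum>A\<in>Pow U. f (U - A)) = (\<Sum>A\<in>Pow U. f A)"
    using sum.reindex_bij_betw[of _ "Pow U" "Pow U" f] by simp
  have pair: "2 * c \<le> (d + 1) * (f A + f (U - A))" if "A \<subseteq> U" for A
  proof -
    have "U - (U - A) = A" using that by auto
    then show ?thesis using assms(3)[OF that] assms(3)[of "U - A"] by (simp add: algebra_simps)
  qed
  have "(\<Sum>A\<in>Pow U. 2 * c) \<le> (\<Sum>A\<in>Pow U. (d + 1) * (f A + f (U - A)))"
    by (rule sum_mono) (use pair in auto)
  also have "\<dots> = 2 * ((d + 1) * (\<Sum>A\<in>Pow U. f A))"
    by (simp add: sum_distrib_left[symmetric] sum.distrib swap algebra_simps)
  finally show ?thesis using assms(1) by (simp add: card_Pow)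
qed

theorem mainTheorem2:
  fixes n i :: nat and d :: real and v :: "(nat \<Rightarrow> real) \<Rightarrow> real" and s :: "nat \<Rightarrow> real"
  assumes "d \<ge> 1" and "i < n" and "dSOS n d v" and "s \<in> nnvec n"
  shows "(\<Sum>A\<in>Pow ({..<n} - {i}). v (restrict_vec s A i)) / 2 ^ (n - 1)
           \<ge> v s / (d + 1)"
proof -
  let ?U = "{..<n} - {i}"
  have "2 ^ card ?U * v s \<le> (d + 1) * (\<Sum>A\<in>Pow ?U. v (restrict_vec s A i))"
    unfolding restrict_vec_eq_restrict_coords
    by (rule sum_Pow_complement_bound) (use assms dSOS_le_split in auto)
  moreover have "card ?U = n - 1" using assms(2) by simp
  ultimately show ?thesis using assms(1) by (simp add: divide_simps mult.commute)
qed

end
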